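(* Let $A:\mathbb{R}^n\to\mathbb{R}^n$ be a linear operator all of whose eigenvalues are (real and) nonnegative. Then $A$ is GTP with respect to some totally positive structure. Moreover, if all eigenvalues of $A$ are positive and simple, then $A$ is GSTP with respect to some totally positive structure.
   Context: A proper cone is a closed convex cone that is pointed and solid. $\wedge^j\mathbb{R}^n$ is the $j$th exterior power and $\wedge^jA$ the operator with $(\wedge^jA)(x_1\wedge\cdots\wedge x_j)=Ax_1\wedge\cdots\wedge Ax_j$. $B$ is $K$-nonnegative if $BK\subseteq K$ and $K$-positive if $B(K\setminus\{0\})\subseteq\operatorname{int}K$. A totally positive structure is a family $\{K_1,\ldots,K_n\}$, $K_j\subset\wedge^j\mathbb{R}^n$ a proper cone; $A$ is GTP (GSTP) with respect to it if $\wedge^jA$ is $K_j$-nonnegative ($K_j$-positive) for all $j=1,\ldots,n$. *)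

theory Defs
  imports "HOL-Analysis.Analysis" "Jordan_Normal_Form.Jordan_Normal_Form" "Jordan_Normal_Form.DL_Submatrix"
begin

text \<open>The j-th exterior power of R^n is modelled in Pluecker coordinates: functions
  f :: nat set => real supported on the j-element subsets of {0..<n}.\<close>

definition ext_space :: "nat \<Rightarrow> nat \<Rightarrow> (nat set \<Rightarrow> real) set" where
  "ext_space n j = {f. \<forall>S. f S \<noteq> 0 \<longrightarrow> S \<subseteq> {0..<n} \<and> card S = j}"

definition jsubsets :: "nat \<Rightarrow> nat \<Rightarrow> nat set set" where
  "jsubsets n j = {S. S \<subseteq> {0..<n} \<and> card S = j}"

text \<open>The j-th compound matrix of A acting on the j-th exterior power:
  its (S,T) entry is the minor of A with rows S and columns T (both in increasing order).\<close>
definition ext_pow :: "nat \<Rightarrow> real mat \<Rightarrow> (nat set \<Rightarrow> real) \<Rightarrow> (nat set \<Rightarrow> real)" where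
  "ext_pow j A f = (\<lambda>S. if S \<in> jsubsets (dim_row A) j
      then (\<Sum>T\<in>jsubsets (dim_row A) j. det (submatrix A S T) * f T) else 0)"

definition proper_cone_in :: "(nat set \<Rightarrow> real) set \<Rightarrow> (nat set \<Rightarrow> real) set \<Rightarrow> bool" where
  "proper_cone_in V K \<longleftrightarrow>
     K \<subseteq> V \<and> K \<noteq> {} \<and>
     (\<forall>x\<in>K. \<forall>y\<in>K. (\<lambda>S. x S + y S) \<in> K) \<and>
     (\<forall>x\<in>K. \<forall>c::real. c \<ge> 0 \<longrightarrow> (\<lambda>S. c * x S) \<in> K) \<and>
     closed K \<and>
     (\<forall>x\<in>K. (\<lambda>S. - x S) \<in> K \<longrightarrow> x = (\<lambda>S. 0)) \<and>
     ((top_of_set V) interior_of K \<noteq> {})"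

definition TP_structure :: "nat \<Rightarrow> (nat \<Rightarrow> (nat set \<Rightarrow> real) set) \<Rightarrow> bool" where
  "TP_structure n K \<longleftrightarrow> (\<forall>j\<in>{1..n}. proper_cone_in (ext_space n j) (K j))"

definition K_nonneg :: "((nat set \<Rightarrow> real) \<Rightarrow> (nat set \<Rightarrow> real)) \<Rightarrow> (nat set \<Rightarrow> real) set \<Rightarrow> bool" where
  "K_nonneg B K \<longleftrightarrow> B ` K \<subseteq> K"

definition K_pos :: "(nat set \<Rightarrow> real) set \<Rightarrow> ((nat set \<Rightarrow> real) \<Rightarrow> (nat set \<Rightarrow> real)) \<Rightarrow> (nat set \<Rightarrow> real) set \<Rightarrow> bool" where
  "K_pos V B K \<longleftrightarrow> B ` (K - {\<lambda>S. 0}) \<subseteq> (top_of_set V) interior_of K"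

definition GTP :: "real mat \<Rightarrow> (nat \<Rightarrow> (nat set \<Rightarrow> real) set) \<Rightarrow> bool" where
  "GTP A K \<longleftrightarrow> (\<forall>j\<in>{1..dim_row A}. K_nonneg (ext_pow j A) (K j))"

definition GSTP :: "real mat \<Rightarrow> (nat \<Rightarrow> (nat set \<Rightarrow> real) set) \<Rightarrow> bool" where
  "GSTP A K \<longleftrightarrow> (\<forall>j\<in>{1..dim_row A}. K_pos (ext_space (dim_row A) j) (ext_pow j A) (K j))"

end

theory Submission
  imports Defs "Jordan_Normal_Form.Jordan_Normal_Form_Existence"
begin

text \<open>All eigenvalues being real, \<open>A = P J Q\<close> with \<open>J\<close> a real Jordan matrix and \<open>Q = P\<inverse>\<close>.
  By Cauchy--Binet the compound matrices are multiplicative, so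
  \<open>\<wedge>\<^sup>j A = \<wedge>\<^sup>j P \<wedge>\<^sup>j J \<wedge>\<^sup>j Q\<close>, and a proper cone \<open>C\<close> in coordinates that is mapped into itself
  (into its interior) by \<open>\<wedge>\<^sup>j J\<close> pulls back to the proper cone \<open>{y. \<wedge>\<^sup>j Q y \<in> C}\<close> with the
  same property for \<open>\<wedge>\<^sup>j A\<close>.
  For nonnegative eigenvalues \<open>J\<close> is upper bidiagonal with nonnegative entries, so all its
  minors are nonnegative and \<open>\<wedge>\<^sup>j J\<close> preserves the nonnegative orthant.
  For simple positive eigenvalues \<open>J\<close> is diagonal with distinct positive entries \<open>d\<^sub>i\<close>, so
  \<open>\<wedge>\<^sup>j J\<close> is diagonal with entries \<open>\<Prod>i\<in>S. d\<^sub>i\<close>; these have a unique maximum at some \<open>S\<^sub>0\<close>,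
  and \<open>\<wedge>\<^sup>j J\<close> maps every nonzero point of the cone \<open>\<Sum>S\<noteq>S\<^sub>0. \<bar>x\<^sub>S\<bar> \<le> x\<^sub>S\<^sub>0\<close> into its interior.\<close>

lemma pick_image:
  assumes "finite U"
  shows "pick U ` {0..<card U} = U"
proof
  show "pick U ` {0..<card U} \<subseteq> U" using pick_in_set_le by auto
  show "U \<subseteq> pick U ` {0..<card U}"
  proof
    fix x assume x: "x \<in> U"
    have "card {a\<in>U. a < x} < card U"
      using x assms by (intro psubset_card_mono) auto
    then show "x \<in> pick U ` {0..<card U}" using pick_card_in_set[OF x] by force
  qed
qed

lemma pick_inj_on: "inj_on (pick U) {0..<card U}"
proof (rule inj_onI)
  fix x y assume "x \<in> {0..<card U}" "y \<in> {0..<card U}" "pick U x = pick U y"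
  then show "x = y" using pick_mono_le[of x U y] pick_mono_le[of y U x] by (cases "x < y"; cases "y < x"; simp)
qed

lemma finite_jsubsets: "finite (jsubsets n j)"
  unfolding jsubsets_def by (rule finite_subset[of _ "Pow {0..<n}"]) auto

lemma card_bounded_jsubset:
  assumes "S \<in> jsubsets n j"
  shows "card {i. i < n \<and> i \<in> S} = j"
proof -
  have "{i. i < n \<and> i \<in> S} = S" using assms by (auto simp: jsubsets_def)
  then show ?thesis using assms by (simp add: jsubsets_def)
qed

lemma pick_jsubset_less:
  assumes "S \<in> jsubsets n j" and "i < j"
  shows "pick S i < n"
  using pick_le[of i n S] card_bounded_jsubset[OF assms(1)] assms(2) by simp

lemma jsubsets_eqI:
  assumes S: "S \<in> jsubsets n j" and T: "T \<in> jsubsets n j"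
    and eq: "\<And>i. i < j \<Longrightarrow> pick S i = pick T i"
  shows "S = T"
proof -
  have "finite S" "finite T" "card S = j" "card T = j"
    using S T by (auto simp: jsubsets_def finite_subset)
  then show ?thesis using pick_image[of S] pick_image[of T] eq by (metis atLeastLessThan_iff image_cong)
qed

lemma submatrix_split_rows: "submatrix A I J = submatrix (submatrix A I UNIV) UNIV J"
proof (rule eq_matI)
  fix i j assume "i < dim_row (submatrix (submatrix A I UNIV) UNIV J)"
    "j < dim_col (submatrix (submatrix A I UNIV) UNIV J)"
  then have i: "i < card {i. i < dim_row A \<and> i \<in> I}" and j: "j < card {j. j < dim_col A \<and> j \<in> J}"
    by (simp_all add: dim_submatrix)
  have "pick J j < dim_col A" using pick_le[OF j] .
  then show "submatrix A I J $$ (i, j) = submatrix (submatrix A I UNIV) UNIV J $$ (i, j)"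
    using i j by (simp add: submatrix_index dim_submatrix pick_UNIV)
qed (simp_all add: dim_submatrix)

lemma submatrix_mult:
  assumes "dim_col A = dim_row B"
  shows "submatrix (A * B) I J = submatrix A I UNIV * submatrix B UNIV J"
proof (rule eq_matI)
  fix i k assume "i < dim_row (submatrix A I UNIV * submatrix B UNIV J)"
    "k < dim_col (submatrix A I UNIV * submatrix B UNIV J)"
  then have i: "i < card {i. i < dim_row A \<and> i \<in> I}" and k: "k < card {j. j < dim_col B \<and> j \<in> J}"
    by (simp_all add: dim_submatrix)
  have "pick I i < dim_row A" "pick J k < dim_col B" using pick_le[OF i] pick_le[OF k] .
  then show "submatrix (A * B) I J $$ (i, k) = (submatrix A I UNIV * submatrix B UNIV J) $$ (i, k)"
    using i k assms by (simp add: submatrix_index dim_submatrix pick_UNIV scalar_prod_def)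
qed (simp_all add: dim_submatrix)

lemma det_submatrix_leibniz:
  assumes I: "card {i. i < dim_row A \<and> i \<in> I} = j" and J: "card {k. k < dim_col A \<and> k \<in> J} = j"
  shows "det (submatrix A I J) =
    (\<Sum>p | p permutes {0..<j}. signof p * (\<Prod>i = 0..<j. A $$ (pick I i, pick J (p i))))"
proof -
  have c: "submatrix A I J \<in> carrier_mat j j" using I J by (intro carrier_matI) (simp_all add: dim_submatrix)
  show ?thesis unfolding det_def'[OF c]
  proof (intro sum.cong refl arg_cong[where f = "\<lambda>x. signof _ * x"] prod.cong)
    fix p i assume "p \<in> {p. p permutes {0..<j}}" "i \<in> {0..<j}"
    then have "p i < j" using permutes_in_image by fastforce
    with \<open>i \<in> {0..<j}\<close> show "submatrix A I J $$ (i, p i) = A $$ (pick I i, pick J (p i))"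
      using I J by (simp add: submatrix_index)
  qed
qed

section \<open>The Cauchy--Binet formula\<close>

text \<open>Expanding \<open>det (C * D)\<close> row by row gives a sum over index maps \<open>{0..<m} \<rightarrow> {0..<n}\<close>
  (normalised to the identity outside \<open>{0..<m}\<close>); the terms of non-injective maps vanish, and an
  injective map factors uniquely as the increasing enumeration \<open>pick U\<close> of its image \<open>U\<close> after a
  permutation of \<open>{0..<m}\<close>.\<close>
definition injective_selections :: "nat \<Rightarrow> nat \<Rightarrow> (nat \<Rightarrow> nat) set" where
  "injective_selections m n =
     {f. (\<forall>i\<in>{0..<m}. f i \<in> {0..<n}) \<and> (\<forall>i. i \<notin> {0..<m} \<longrightarrow> f i = i) \<and> inj_on f {0..<m}}"

lemma det_mult_sum_injective_selections:
  fixes C :: "'a::comm_ring_1 mat"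
  assumes C: "C \<in> carrier_mat m n" and D: "D \<in> carrier_mat n m"
  shows "det (C * D) = (\<Sum>f\<in>injective_selections m n.
           (\<Prod>i = 0..<m. C $$ (i, f i)) * det (mat\<^sub>r m m (\<lambda>i. row D (f i))))"
proof -
  let ?F = "{f. (\<forall>i\<in>{0..<m}. f i \<in> {0..<n}) \<and> (\<forall>i. i \<notin> {0..<m} \<longrightarrow> f i = i)}"
  let ?g = "\<lambda>f. (\<Prod>i = 0..<m. C $$ (i, f i)) * det (mat\<^sub>r m m (\<lambda>i. row D (f i)))"
  have "det (C * D) = (\<Sum>f\<in>?F. det (mat\<^sub>r m m (\<lambda>i. C $$ (i, f i) \<cdot>\<^sub>v row D (f i))))"
    unfolding mat_mul_finsum_alt[OF C D] using D by (intro det_linear_rows_sum) auto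
  also have "\<dots> = (\<Sum>f\<in>?F. ?g f)"
    using D by (intro sum.cong refl, subst det_rows_mul) auto
  also have "\<dots> = (\<Sum>f\<in>injective_selections m n. ?g f)"
  proof (rule sum.mono_neutral_right)
    show "finite ?F" by (rule finite_bounded_functions) auto
    show "\<forall>f\<in>?F - injective_selections m n. ?g f = 0"
    proof
      fix f assume "f \<in> ?F - injective_selections m n"
      then obtain i k where "f i = f k" "i \<noteq> k" "i < m" "k < m"
        unfolding injective_selections_def inj_on_def by auto
      then have "det (mat\<^sub>r m m (\<lambda>i. row D (f i))) = 0"
        by (intro det_identical_rows[of _ m i k]) auto
      then show "?g f = 0" by simp
    qed
  qed (auto simp: injective_selections_def)
  finally show ?thesis .
qed

lemma pick_perm_in_injective_selections:
  assumes U: "U \<in> jsubsets n m" and p: "p permutes {0..<m}"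
  shows "(\<lambda>i. if i < m then pick U (p i) else i) \<in> injective_selections m n"
proof -
  have pm: "p i < m" if "i < m" for i using that permutes_in_image[OF p] by simp
  have U': "U \<subseteq> {0..<n}" "card U = m" using U by (auto simp: jsubsets_def)
  have "pick U (p i) < n" if "i < m" for i using pick_in_set_le[of "p i" U] pm[OF that] U' by auto
  moreover have "inj_on (\<lambda>i. pick U (p i)) {0..<m}"
  proof (rule inj_onI)
    fix i k assume "i \<in> {0..<m}" "k \<in> {0..<m}" "pick U (p i) = pick U (p k)"
    then have "p i = p k" using pick_inj_on[of U] U'(2) pm by (auto simp: inj_on_def)
    then show "i = k" using permutes_inj[OF p] by (simp add: inj_eq)
  qed
  ultimately show ?thesis unfolding injective_selections_def inj_on_def by auto
qed

lemma injective_selection_factors: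
  assumes f: "f \<in> injective_selections m n"
  defines "U \<equiv> f ` {0..<m}"
  defines "p \<equiv> \<lambda>i. if i < m then card {a\<in>U. a < f i} else i"
  shows "U \<in> jsubsets n m" and "p permutes {0..<m}"
    and "(\<lambda>i. if i < m then pick U (p i) else i) = f"
proof -
  have inj: "inj_on f {0..<m}" and fn: "\<And>i. i < m \<Longrightarrow> f i < n" and fid: "\<And>i. m \<le> i \<Longrightarrow> f i = i"
    using f by (auto simp: injective_selections_def)
  have cU: "card U = m" unfolding U_def using card_image[OF inj] by simp
  show "U \<in> jsubsets n m" unfolding jsubsets_def U_def using cU fn by (auto simp: U_def)
  have pick_p: "pick U (p i) = f i" if "i < m" for i
    using pick_card_in_set[of "f i" U] that by (simp add: U_def p_def)
  have pm: "p i < m" if "i < m" for i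
  proof -
    have "{a\<in>U. a < f i} \<subset> U" using that by (auto simp: U_def)
    from psubset_card_mono[OF _ this] show ?thesis using that cU by (simp add: U_def p_def)
  qed
  show "p permutes {0..<m}"
  proof (rule inj_on_nat_permutes)
    show "inj_on p {0..<m}"
      using inj pick_p by (intro inj_onI) (metis atLeastLessThan_iff inj_on_eq_iff)
    show "p \<in> {0..<m} \<rightarrow> {0..<m}" using pm by simp
    show "\<And>i. i \<notin> {0..<m} \<Longrightarrow> p i = i" by (simp add: p_def)
  qed simp
  show "(\<lambda>i. if i < m then pick U (p i) else i) = f"
    using pick_p fid by (auto simp: not_less)
qed

lemma pick_perm_selection_inverse:
  assumes U: "U \<in> jsubsets n m" and p: "p permutes {0..<m}"
  defines "f \<equiv> \<lambda>i. if i < m then pick U (p i) else i"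
  shows "(f ` {0..<m}, \<lambda>i. if i < m then card {a\<in>f ` {0..<m}. a < f i} else i) = (U, p)"
proof -
  have U': "card U = m" "finite U" using U by (auto simp: jsubsets_def finite_subset)
  have pm: "p i < m" if "i < m" for i using that permutes_in_image[OF p] by simp
  have img: "f ` {0..<m} = U"
  proof -
    have "f ` {0..<m} = pick U ` p ` {0..<m}" by (auto simp: image_iff f_def)
    then show ?thesis using permutes_image[OF p] pick_image[OF U'(2)] U'(1) by simp
  qed
  have "(\<lambda>i. if i < m then card {a\<in>U. a < f i} else i) = p"
    using card_pick_le pm U'(1) permutes_not_in[OF p] by (fastforce simp: f_def)
  then show ?thesis unfolding img by simp
qed

lemma bij_betw_pick_perm_injective_selections:
  "bij_betw (\<lambda>(U, p) i. if i < m then pick U (p i) else i)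
     (SIGMA U:jsubsets n m. {p. p permutes {0..<m}}) (injective_selections m n)"
  by (rule bij_betw_byWitness[where
        f' = "\<lambda>f. (f ` {0..<m}, \<lambda>i. if i < m then card {a\<in>f ` {0..<m}. a < f i} else i)"])
    (use pick_perm_selection_inverse pick_perm_in_injective_selections injective_selection_factors in auto)

lemma det_rows_pick_perm:
  assumes D: "D \<in> carrier_mat n m" and U: "U \<in> jsubsets n m" and p: "p permutes {0..<m}"
  shows "det (mat\<^sub>r m m (\<lambda>i. row D (pick U (p i)))) = signof p * det (submatrix D U UNIV)"
proof -
  have cU: "card {i. i < n \<and> i \<in> U} = m" by (rule card_bounded_jsubset[OF U])
  have SD: "submatrix D U UNIV \<in> carrier_mat m m"
    using D cU by (intro carrier_matI) (simp_all add: dim_submatrix)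
  have pm: "p i < m" if "i < m" for i using that permutes_in_image[OF p] by simp
  have "mat\<^sub>r m m (\<lambda>i. row D (pick U (p i))) = mat m m (\<lambda>(i, k). submatrix D U UNIV $$ (p i, k))"
  proof (rule eq_matI)
    fix i k assume "i < dim_row (mat m m (\<lambda>(i, k). submatrix D U UNIV $$ (p i, k)))"
      "k < dim_col (mat m m (\<lambda>(i, k). submatrix D U UNIV $$ (p i, k)))"
    then have ik: "i < m" "k < m" by auto
    then have "pick U (p i) < n" using pick_le[of "p i" n U] pm cU by simp
    then show "mat\<^sub>r m m (\<lambda>i. row D (pick U (p i))) $$ (i, k) = mat m m (\<lambda>(i, k). submatrix D U UNIV $$ (p i, k)) $$ (i, k)"
      using ik pm[OF ik(1)] D cU by (simp add: submatrix_index pick_UNIV)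
  qed auto
  then show ?thesis using det_permute_rows[OF SD p] by simp
qed

theorem cauchy_binet:
  fixes C :: "'a::comm_ring_1 mat"
  assumes C: "C \<in> carrier_mat m n" and D: "D \<in> carrier_mat n m"
  shows "det (C * D) = (\<Sum>U\<in>jsubsets n m. det (submatrix C UNIV U) * det (submatrix D U UNIV))"
proof -
  let ?g = "\<lambda>f. (\<Prod>i = 0..<m. C $$ (i, f i)) * det (mat\<^sub>r m m (\<lambda>i. row D (f i)))"
  let ?P = "{p. p permutes {0..<m}}"
  have "det (C * D) = (\<Sum>f\<in>injective_selections m n. ?g f)"
    by (rule det_mult_sum_injective_selections[OF C D])
  also have "\<dots> = (\<Sum>(U, p)\<in>(SIGMA U:jsubsets n m. ?P). ?g (\<lambda>i. if i < m then pick U (p i) else i))"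
    unfolding case_prod_unfold
    by (rule sum.reindex_bij_betw[OF bij_betw_pick_perm_injective_selections[unfolded case_prod_unfold], symmetric])
  also have "\<dots> = (\<Sum>U\<in>jsubsets n m. \<Sum>p\<in>?P. ?g (\<lambda>i. if i < m then pick U (p i) else i))"
    by (intro sum.Sigma[symmetric]) (auto simp: finite_jsubsets finite_permutations)
  also have "\<dots> = (\<Sum>U\<in>jsubsets n m. det (submatrix C UNIV U) * det (submatrix D U UNIV))"
  proof (rule sum.cong[OF refl])
    fix U assume U: "U \<in> jsubsets n m"
    have cU: "card {i. i < dim_col C \<and> i \<in> U} = m" using card_bounded_jsubset[OF U] C by simp
    have "?g (\<lambda>i. if i < m then pick U (p i) else i)
        = signof p * (\<Prod>i = 0..<m. C $$ (i, pick U (p i))) * det (submatrix D U UNIV)"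
      if p: "p \<in> ?P" for p
    proof -
      have "mat\<^sub>r m m (\<lambda>i. row D (if i < m then pick U (p i) else i)) = mat\<^sub>r m m (\<lambda>i. row D (pick U (p i)))"
        by (rule eq_rowI) auto
      then show ?thesis using det_rows_pick_perm[OF D U] p by (simp add: ac_simps)
    qed
    then have "(\<Sum>p\<in>?P. ?g (\<lambda>i. if i < m then pick U (p i) else i))
        = (\<Sum>p\<in>?P. signof p * (\<Prod>i = 0..<m. C $$ (pick UNIV i, pick U (p i)))) * det (submatrix D U UNIV)"
      by (simp add: sum_distrib_right pick_UNIV)
    also have "\<dots> = det (submatrix C UNIV U) * det (submatrix D U UNIV)"
      using C cU by (subst det_submatrix_leibniz) auto
    finally show "(\<Sum>p\<in>?P. ?g (\<lambda>i. if i < m then pick U (p i) else i))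
        = det (submatrix C UNIV U) * det (submatrix D U UNIV)" .
  qed
  finally show ?thesis .
qed

section \<open>Minors of bidiagonal and diagonal matrices\<close>

lemma strict_mono_permutes_id:
  fixes p :: "nat \<Rightarrow> nat"
  assumes p: "p permutes {0..<j}" and mono: "\<And>x y. x < y \<Longrightarrow> y < j \<Longrightarrow> p x < p y"
  shows "p = id"
proof -
  have ge: "i \<le> p i" if "i < j" for i
    using that
  proof (induction i)
    case (Suc i)
    then show ?case using mono[of i "Suc i"] by simp
  qed simp
  have sums: "(\<Sum>i\<in>{0..<j}. i) = (\<Sum>i\<in>{0..<j}. p i)"
    using sum.permute[OF p, of "\<lambda>i. i"] by (simp add: o_def)
  have "p i = i" if "i < j" for i
    using sum_mono_inv[OF sums, of i] ge that by simp
  then show ?thesis using permutes_not_in[OF p] by (metis atLeastLessThan_iff eq_id_iff not_le zero_le)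
qed

text \<open>A nonzero Leibniz term needs \<open>pick T (p i) \<in> {pick S i, Suc (pick S i)}\<close> for all \<open>i\<close>, which
  forces the permutation \<open>p\<close> to be increasing, i.e. the identity.\<close>
lemma det_submatrix_bidiagonal:
  fixes B :: "'a :: idom mat"
  assumes B: "B \<in> carrier_mat n n" and S: "S \<in> jsubsets n j" and T: "T \<in> jsubsets n j"
    and bidiagonal: "\<And>i k. i < n \<Longrightarrow> k < n \<Longrightarrow> B $$ (i, k) \<noteq> 0 \<Longrightarrow> k = i \<or> k = Suc i"
  shows "det (submatrix B S T) = (\<Prod>i = 0..<j. B $$ (pick S i, pick T i))"
proof -
  let ?P = "{p. p permutes {0..<j}}"
  let ?t = "\<lambda>p. signof p * (\<Prod>i = 0..<j. B $$ (pick S i, pick T (p i)))"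
  have "?t p = 0" if p: "p permutes {0..<j}" "p \<noteq> id" for p
  proof (rule ccontr)
    assume "?t p \<noteq> 0"
    then have nz: "B $$ (pick S i, pick T (p i)) \<noteq> 0" if "i < j" for i
      using that by auto
    have pj: "p i < j" if "i < j" for i using permutes_in_image[OF p(1), of i] that by simp
    have near: "pick T (p i) = pick S i \<or> pick T (p i) = Suc (pick S i)" if "i < j" for i
      using bidiagonal[OF pick_jsubset_less[OF S that] pick_jsubset_less[OF T pj[OF that]] nz[OF that]] .
    have "p x < p y" if xy: "x < y" "y < j" for x y
    proof (rule ccontr)
      assume "\<not> p x < p y"
      moreover have "p x \<noteq> p y" using permutes_inj[OF p(1)] xy by (auto simp: inj_eq)
      ultimately have "pick T (p y) < pick T (p x)"
        using pick_mono_le[of "p x" T "p y"] pj xy T by (auto simp: jsubsets_def)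
      moreover have "pick S x < pick S y" using pick_mono_le[of y S x] xy S by (auto simp: jsubsets_def)
      ultimately show False using near[of x] near[of y] xy by auto
    qed
    with p show False using strict_mono_permutes_id by blast
  qed
  then have "det (submatrix B S T) = ?t id"
    using B S T card_bounded_jsubset[OF S] card_bounded_jsubset[OF T]
    by (simp add: det_submatrix_leibniz sum.remove[of ?P id] permutes_id finite_permutations sum.neutral)
  then show ?thesis by (simp add: sign_id)
qed

lemma det_submatrix_diagonal:
  fixes B :: "'a :: idom mat"
  assumes B: "B \<in> carrier_mat n n" and S: "S \<in> jsubsets n j" and T: "T \<in> jsubsets n j"
    and diagonal: "\<And>i k. i < n \<Longrightarrow> k < n \<Longrightarrow> i \<noteq> k \<Longrightarrow> B $$ (i, k) = 0"
  shows "det (submatrix B S T) = (if S = T then (\<Prod>i\<in>S. B $$ (i, i)) else 0)"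
proof -
  have minor: "det (submatrix B S T) = (\<Prod>i = 0..<j. B $$ (pick S i, pick T i))"
    using diagonal by (intro det_submatrix_bidiagonal[OF B S T]) blast
  show ?thesis
  proof (cases "S = T")
    case True
    have "finite S" "card S = j" using S by (auto simp: jsubsets_def finite_subset)
    then have "(\<Prod>i = 0..<j. B $$ (pick S i, pick S i)) = (\<Prod>i\<in>S. B $$ (i, i))"
      using prod.reindex[OF pick_inj_on[of S], of "\<lambda>i. B $$ (i, i)"] pick_image[of S] by simp
    then show ?thesis using minor True by simp
  next
    case False
    then obtain i where "i < j" "pick S i \<noteq> pick T i" using jsubsets_eqI[OF S T] by blast
    then have "B $$ (pick S i, pick T i) = 0"
      using diagonal pick_jsubset_less[OF S] pick_jsubset_less[OF T] by blast
    then have "(\<Prod>i = 0..<j. B $$ (pick S i, pick T i)) = 0" using \<open>i < j\<close> by (intro prod_zero) auto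
    then show ?thesis using minor False by simp
  qed
qed

lemma det_submatrix_mult:
  fixes A B :: "'a :: comm_ring_1 mat"
  assumes A: "A \<in> carrier_mat n n" and B: "B \<in> carrier_mat n n"
    and S: "S \<in> jsubsets n j" and T: "T \<in> jsubsets n j"
  shows "det (submatrix (A * B) S T) = (\<Sum>U\<in>jsubsets n j. det (submatrix A S U) * det (submatrix B U T))"
proof -
  have "submatrix A S UNIV \<in> carrier_mat j n" "submatrix B UNIV T \<in> carrier_mat n j"
    using A B card_bounded_jsubset[OF S] card_bounded_jsubset[OF T]
    by (auto intro!: carrier_matI simp: dim_submatrix)
  from cauchy_binet[OF this] show ?thesis
    using A B by (simp add: submatrix_mult submatrix_split_rows[symmetric] submatrix_split[symmetric])
qed

lemma ext_space_iff: "x \<in> ext_space n j \<longleftrightarrow> (\<forall>S. S \<notin> jsubsets n j \<longrightarrow> x S = 0)"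
  unfolding ext_space_def jsubsets_def by blast

lemma closed_ext_space: "closed (ext_space n j)"
proof -
  have "ext_space n j = (\<Inter>S\<in>- jsubsets n j. {x. x S = 0})"
    by (auto simp: ext_space_iff)
  then show ?thesis by (simp add: closed_INT closed_Collect_eq continuous_on_const continuous_on_component)
qed

lemma ext_pow_apply:
  "S \<in> jsubsets (dim_row A) j \<Longrightarrow>
    ext_pow j A x S = (\<Sum>T\<in>jsubsets (dim_row A) j. det (submatrix A S T) * x T)"
  unfolding ext_pow_def by simp

lemma ext_pow_in_ext_space: "ext_pow j A x \<in> ext_space (dim_row A) j"
  unfolding ext_pow_def ext_space_def jsubsets_def by auto

lemma ext_pow_add: "ext_pow j A (\<lambda>S. x S + y S) = (\<lambda>S. ext_pow j A x S + ext_pow j A y S)"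
  unfolding ext_pow_def by (auto simp: distrib_left sum.distrib)

lemma ext_pow_scale: "ext_pow j A (\<lambda>S. c * x S) = (\<lambda>S. c * ext_pow j A x S)"
  unfolding ext_pow_def by (auto simp: sum_distrib_left ac_simps)

lemma ext_pow_zero: "ext_pow j A (\<lambda>S. 0) = (\<lambda>S. 0)"
  unfolding ext_pow_def by auto

lemma continuous_on_ext_pow: "continuous_on UNIV (ext_pow j A)"
proof (rule continuous_on_coordinatewise_then_product)
  fix S
  show "continuous_on UNIV (\<lambda>x. ext_pow j A x S)"
    by (cases "S \<in> jsubsets (dim_row A) j") (auto simp: ext_pow_def intro!: continuous_intros)
qed

lemma ext_pow_mult:
  assumes A: "A \<in> carrier_mat n n" and B: "B \<in> carrier_mat n n"
  shows "ext_pow j (A * B) x = ext_pow j A (ext_pow j B x)"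
proof
  fix S
  show "ext_pow j (A * B) x S = ext_pow j A (ext_pow j B x) S"
  proof (cases "S \<in> jsubsets n j")
    case S: True
    have "ext_pow j A (ext_pow j B x) S = (\<Sum>U\<in>jsubsets n j. \<Sum>T\<in>jsubsets n j.
            det (submatrix A S U) * det (submatrix B U T) * x T)"
      using A B S by (simp add: ext_pow_apply sum_distrib_left mult.assoc)
    also have "\<dots> = (\<Sum>T\<in>jsubsets n j. det (submatrix (A * B) S T) * x T)"
      using A B S by (subst sum.swap) (simp add: det_submatrix_mult sum_distrib_right)
    finally show ?thesis using A S by (simp add: ext_pow_apply)
  qed (use A B in \<open>simp add: ext_pow_def\<close>)
qed

lemma ext_pow_one:
  assumes "x \<in> ext_space n j"
  shows "ext_pow j (1\<^sub>m n) x = x"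
proof
  fix S
  show "ext_pow j (1\<^sub>m n) x S = x S"
  proof (cases "S \<in> jsubsets n j")
    case S: True
    have minor: "det (submatrix (1\<^sub>m n :: real mat) S T) = (if S = T then 1 else 0)" if T: "T \<in> jsubsets n j" for T
      using det_submatrix_diagonal[OF one_carrier_mat S T] T
      by (cases "S = T") (simp_all add: jsubsets_def subset_eq)
    have "ext_pow j (1\<^sub>m n) x S = (\<Sum>T\<in>jsubsets n j. det (submatrix (1\<^sub>m n) S T) * x T)"
      using S by (simp add: ext_pow_apply)
    also have "\<dots> = (\<Sum>T\<in>jsubsets n j. if S = T then x T else 0)"
      by (rule sum.cong[OF refl]) (simp add: minor)
    also have "\<dots> = x S" using S by (simp add: finite_jsubsets)
    finally show ?thesis .
  next
    case False
    then show ?thesis using assms by (auto simp: ext_pow_def ext_space_def jsubsets_def)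
  qed
qed

lemma ext_pow_inverse:
  assumes "P \<in> carrier_mat n n" "Q \<in> carrier_mat n n" "P * Q = 1\<^sub>m n" "y \<in> ext_space n j"
  shows "ext_pow j P (ext_pow j Q y) = y"
  using ext_pow_mult[OF assms(1,2), of j y] assms(3,4) ext_pow_one by simp

lemma ext_pow_conjugate:
  assumes P: "P \<in> carrier_mat n n" and Q: "Q \<in> carrier_mat n n" and J: "J \<in> carrier_mat n n"
    and QP: "Q * P = 1\<^sub>m n"
  shows "ext_pow j Q (ext_pow j (P * J * Q) y) = ext_pow j J (ext_pow j Q y)"
proof -
  have "Q * (P * J * Q) = Q * (P * J) * Q" using P Q J by (simp add: assoc_mult_mat[of Q n n "P * J" n Q])
  also have "\<dots> = Q * P * J * Q" using P Q J by (simp add: assoc_mult_mat[of Q n n P n J])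
  finally have "Q * (P * J * Q) = J * Q" using QP J by simp
  then show ?thesis using P Q J by (simp add: ext_pow_mult[symmetric])
qed

section \<open>Pulling cones back along compound matrices\<close>

definition pullback_cone :: "nat \<Rightarrow> nat \<Rightarrow> real mat \<Rightarrow> (nat set \<Rightarrow> real) set \<Rightarrow> (nat set \<Rightarrow> real) set" where
  "pullback_cone n j Q C = {y \<in> ext_space n j. ext_pow j Q y \<in> C}"

lemma pullback_cone_interior:
  assumes Q: "Q \<in> carrier_mat n n" and y: "y \<in> ext_space n j"
    and Qy: "ext_pow j Q y \<in> top_of_set (ext_space n j) interior_of C"
  shows "y \<in> top_of_set (ext_space n j) interior_of pullback_cone n j Q C"
proof -
  let ?V = "ext_space n j" and ?I = "top_of_set (ext_space n j) interior_of C"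
  have "openin (top_of_set ?V) (?V \<inter> ext_pow j Q -` ?I)"
    by (rule continuous_openin_preimage[OF continuous_on_subset[OF continuous_on_ext_pow subset_UNIV], where T = ?V])
      (use Q ext_pow_in_ext_space[of j Q] in auto)
  moreover have "?V \<inter> ext_pow j Q -` ?I \<subseteq> pullback_cone n j Q C"
    using interior_of_subset[of "top_of_set ?V" C] by (auto simp: pullback_cone_def)
  ultimately show ?thesis using interior_of_maximal y Qy by blast
qed

lemma proper_cone_in_pullback_cone:
  assumes P: "P \<in> carrier_mat n n" and Q: "Q \<in> carrier_mat n n"
    and PQ: "P * Q = 1\<^sub>m n" and QP: "Q * P = 1\<^sub>m n"
    and C: "proper_cone_in (ext_space n j) C"
  shows "proper_cone_in (ext_space n j) (pullback_cone n j Q C)"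
  unfolding proper_cone_in_def
proof (intro conjI)
  let ?V = "ext_space n j" and ?K = "pullback_cone n j Q C"
  have add: "\<And>x y. x \<in> C \<Longrightarrow> y \<in> C \<Longrightarrow> (\<lambda>S. x S + y S) \<in> C"
    and scale: "\<And>x c. x \<in> C \<Longrightarrow> c \<ge> 0 \<Longrightarrow> (\<lambda>S. c * x S) \<in> C"
    and pointed: "\<And>x. x \<in> C \<Longrightarrow> (\<lambda>S. - x S) \<in> C \<Longrightarrow> x = (\<lambda>S. 0)"
    using C unfolding proper_cone_in_def by auto
  have V: "\<And>x y. x \<in> ?V \<Longrightarrow> y \<in> ?V \<Longrightarrow> (\<lambda>S. x S + y S) \<in> ?V"
    "\<And>x c. x \<in> ?V \<Longrightarrow> (\<lambda>S. c * x S) \<in> ?V"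
    by (simp_all add: ext_space_iff)
  obtain x0 where "x0 \<in> C" using C unfolding proper_cone_in_def by blast
  then have "(\<lambda>S. 0) \<in> C" using scale[of x0 0] by simp
  then show "?K \<noteq> {}" using ext_pow_zero[of j Q] by (auto simp: pullback_cone_def ext_space_iff)
  show "?K \<subseteq> ?V" by (auto simp: pullback_cone_def)
  show "\<forall>x\<in>?K. \<forall>y\<in>?K. (\<lambda>S. x S + y S) \<in> ?K"
    using add V by (simp add: pullback_cone_def ext_pow_add)
  show "\<forall>x\<in>?K. \<forall>c::real. c \<ge> 0 \<longrightarrow> (\<lambda>S. c * x S) \<in> ?K"
    using scale V by (simp add: pullback_cone_def ext_pow_scale)
  show "\<forall>x\<in>?K. (\<lambda>S. - x S) \<in> ?K \<longrightarrow> x = (\<lambda>S. 0)"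
  proof (intro ballI impI)
    fix y assume y: "y \<in> ?K" and "(\<lambda>S. - y S) \<in> ?K"
    then have "ext_pow j Q y = (\<lambda>S. 0)"
      using pointed ext_pow_scale[of j Q "-1" y] by (simp add: pullback_cone_def)
    then show "y = (\<lambda>S. 0)"
      using ext_pow_inverse[OF P Q PQ] y ext_pow_zero by (metis (mono_tags, lifting) mem_Collect_eq pullback_cone_def)
  qed
  have "?K = ?V \<inter> ext_pow j Q -` C" by (auto simp: pullback_cone_def)
  then show "closed ?K"
    using C closed_ext_space continuous_on_ext_pow
    by (simp add: proper_cone_in_def closed_Int closed_vimage)
  obtain x where x: "x \<in> top_of_set ?V interior_of C"
    using C unfolding proper_cone_in_def by blast
  then have "x \<in> ?V" using C interior_of_subset_topspace[of "top_of_set ?V" C] by auto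
  then have "ext_pow j P x \<in> top_of_set ?V interior_of ?K"
    using x P Q QP ext_pow_in_ext_space[of j P x]
    by (intro pullback_cone_interior) (auto simp: ext_pow_inverse)
  then show "top_of_set ?V interior_of ?K \<noteq> {}" by blast
qed

lemma K_nonneg_pullback_cone:
  assumes P: "P \<in> carrier_mat n n" and Q: "Q \<in> carrier_mat n n" and J: "J \<in> carrier_mat n n"
    and QP: "Q * P = 1\<^sub>m n" and C: "K_nonneg (ext_pow j J) C"
  shows "K_nonneg (ext_pow j (P * J * Q)) (pullback_cone n j Q C)"
  using C ext_pow_conjugate[OF P Q J QP] ext_pow_in_ext_space[of j "P * J * Q"] P
  by (auto simp: K_nonneg_def pullback_cone_def)

lemma K_pos_pullback_cone:
  assumes P: "P \<in> carrier_mat n n" and Q: "Q \<in> carrier_mat n n" and J: "J \<in> carrier_mat n n"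
    and PQ: "P * Q = 1\<^sub>m n" and QP: "Q * P = 1\<^sub>m n" and C: "K_pos (ext_space n j) (ext_pow j J) C"
  shows "K_pos (ext_space n j) (ext_pow j (P * J * Q)) (pullback_cone n j Q C)"
  unfolding K_pos_def
proof (rule image_subsetI)
  fix y assume "y \<in> pullback_cone n j Q C - {\<lambda>S. 0}"
  then have y: "y \<in> ext_space n j" "ext_pow j Q y \<in> C" "y \<noteq> (\<lambda>S. 0)"
    by (auto simp: pullback_cone_def)
  then have "ext_pow j Q y \<noteq> (\<lambda>S. 0)" using ext_pow_inverse[OF P Q PQ y(1)] ext_pow_zero by metis
  then have "ext_pow j Q (ext_pow j (P * J * Q) y) \<in> top_of_set (ext_space n j) interior_of C"
    using C y(2) ext_pow_conjugate[OF P Q J QP] unfolding K_pos_def by blast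
  then show "ext_pow j (P * J * Q) y \<in> top_of_set (ext_space n j) interior_of pullback_cone n j Q C"
    using Q P ext_pow_in_ext_space[of j "P * J * Q" y] by (intro pullback_cone_interior) auto
qed

lemma GTP_conjugate:
  assumes P: "P \<in> carrier_mat n n" and Q: "Q \<in> carrier_mat n n" and J: "J \<in> carrier_mat n n"
    and PQ: "P * Q = 1\<^sub>m n" and QP: "Q * P = 1\<^sub>m n"
    and C: "\<And>j. j \<in> {1..n} \<Longrightarrow> proper_cone_in (ext_space n j) (C j) \<and> K_nonneg (ext_pow j J) (C j)"
  shows "TP_structure n (\<lambda>j. pullback_cone n j Q (C j)) \<and> GTP (P * J * Q) (\<lambda>j. pullback_cone n j Q (C j))"
  using C P proper_cone_in_pullback_cone[OF P Q PQ QP] K_nonneg_pullback_cone[OF P Q J QP]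
  by (simp add: TP_structure_def GTP_def)

lemma GSTP_conjugate:
  assumes P: "P \<in> carrier_mat n n" and Q: "Q \<in> carrier_mat n n" and J: "J \<in> carrier_mat n n"
    and PQ: "P * Q = 1\<^sub>m n" and QP: "Q * P = 1\<^sub>m n"
    and C: "\<And>j. j \<in> {1..n} \<Longrightarrow> proper_cone_in (ext_space n j) (C j) \<and> K_pos (ext_space n j) (ext_pow j J) (C j)"
  shows "TP_structure n (\<lambda>j. pullback_cone n j Q (C j)) \<and> GSTP (P * J * Q) (\<lambda>j. pullback_cone n j Q (C j))"
  using C P proper_cone_in_pullback_cone[OF P Q PQ QP] K_pos_pullback_cone[OF P Q J PQ QP]
  by (simp add: TP_structure_def GSTP_def)

definition nonneg_orthant :: "nat \<Rightarrow> nat \<Rightarrow> (nat set \<Rightarrow> real) set" where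
  "nonneg_orthant n j = {x \<in> ext_space n j. \<forall>S\<in>jsubsets n j. 0 \<le> x S}"

lemma nonneg_orthant_interior:
  assumes "x \<in> ext_space n j" and "\<And>S. S \<in> jsubsets n j \<Longrightarrow> 0 < x S"
  shows "x \<in> top_of_set (ext_space n j) interior_of nonneg_orthant n j"
proof -
  let ?U = "ext_space n j \<inter> (\<Inter>S\<in>jsubsets n j. {x. 0 < x S})"
  have "open (\<Inter>S\<in>jsubsets n j. {x :: nat set \<Rightarrow> real. 0 < x S})"
    by (intro open_INT finite_jsubsets ballI open_Collect_less continuous_intros) simp
  then have "openin (top_of_set (ext_space n j)) ?U" by (rule openin_open_Int)
  moreover have "?U \<subseteq> nonneg_orthant n j" by (auto simp: nonneg_orthant_def less_imp_le)
  moreover have "x \<in> ?U" using assms by simp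
  ultimately show ?thesis using interior_of_maximal by blast
qed

lemma proper_cone_in_nonneg_orthant: "proper_cone_in (ext_space n j) (nonneg_orthant n j)"
  unfolding proper_cone_in_def
proof (intro conjI)
  let ?V = "ext_space n j" and ?K = "nonneg_orthant n j"
  show "?K \<subseteq> ?V" "?K \<noteq> {}" "\<forall>x\<in>?K. \<forall>y\<in>?K. (\<lambda>S. x S + y S) \<in> ?K"
    "\<forall>x\<in>?K. \<forall>c::real. c \<ge> 0 \<longrightarrow> (\<lambda>S. c * x S) \<in> ?K"
    by (auto simp: nonneg_orthant_def ext_space_iff intro!: exI[of _ "\<lambda>S. 0"])
  show "\<forall>x\<in>?K. (\<lambda>S. - x S) \<in> ?K \<longrightarrow> x = (\<lambda>S. 0)"
    by (force simp: nonneg_orthant_def ext_space_iff)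
  have "?K = ?V \<inter> (\<Inter>S\<in>jsubsets n j. {x. 0 \<le> x S})" by (auto simp: nonneg_orthant_def)
  then show "closed ?K"
    by (simp add: closed_Int closed_ext_space closed_INT closed_Collect_le continuous_on_const)
  have "(\<lambda>S. if S \<in> jsubsets n j then 1 else 0) \<in> top_of_set ?V interior_of ?K"
    by (intro nonneg_orthant_interior) (simp_all add: ext_space_iff)
  then show "top_of_set ?V interior_of ?K \<noteq> {}" by blast
qed

lemma K_nonneg_nonneg_orthant:
  assumes J: "J \<in> carrier_mat n n"
    and minors: "\<And>S T. S \<in> jsubsets n j \<Longrightarrow> T \<in> jsubsets n j \<Longrightarrow> 0 \<le> det (submatrix J S T)"
  shows "K_nonneg (ext_pow j J) (nonneg_orthant n j)"
  using J ext_pow_in_ext_space[of j J]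
  by (auto simp: K_nonneg_def nonneg_orthant_def ext_pow_apply minors intro!: sum_nonneg)

section \<open>A cone around a dominant coordinate\<close>

definition dominant_cone :: "nat \<Rightarrow> nat \<Rightarrow> nat set \<Rightarrow> (nat set \<Rightarrow> real) set" where
  "dominant_cone n j S0 = {x \<in> ext_space n j. (\<Sum>S\<in>jsubsets n j - {S0}. \<bar>x S\<bar>) \<le> x S0}"

lemma dominant_cone_pos:
  assumes x: "x \<in> dominant_cone n j S0" "x \<noteq> (\<lambda>S. 0)" and S0: "S0 \<in> jsubsets n j"
  shows "0 < x S0"
proof (rule ccontr)
  let ?R = "jsubsets n j - {S0}"
  assume "\<not> 0 < x S0"
  moreover have "0 \<le> (\<Sum>S\<in>?R. \<bar>x S\<bar>)" "(\<Sum>S\<in>?R. \<bar>x S\<bar>) \<le> x S0"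
    using x by (auto simp: dominant_cone_def intro: sum_nonneg)
  ultimately have "x S0 = 0" "(\<Sum>S\<in>?R. \<bar>x S\<bar>) = 0" by linarith+
  then have "\<forall>S\<in>jsubsets n j. x S = 0" using finite_jsubsets[of n j] by (auto simp: sum_nonneg_eq_0_iff)
  then have "x = (\<lambda>S. 0)" using x by (auto simp: dominant_cone_def ext_space_iff)
  with x show False by blast
qed

lemma dominant_cone_interior:
  assumes "x \<in> ext_space n j" and "(\<Sum>S\<in>jsubsets n j - {S0}. \<bar>x S\<bar>) < x S0"
  shows "x \<in> top_of_set (ext_space n j) interior_of dominant_cone n j S0"
proof -
  let ?U = "ext_space n j \<inter> {x. (\<Sum>S\<in>jsubsets n j - {S0}. \<bar>x S\<bar>) < x S0}"
  have "open {x :: nat set \<Rightarrow> real. (\<Sum>S\<in>jsubsets n j - {S0}. \<bar>x S\<bar>) < x S0}"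
    by (intro open_Collect_less continuous_intros) simp_all
  then have "openin (top_of_set (ext_space n j)) ?U" by (rule openin_open_Int)
  moreover have "?U \<subseteq> dominant_cone n j S0" by (auto simp: dominant_cone_def)
  moreover have "x \<in> ?U" using assms by simp
  ultimately show ?thesis using interior_of_maximal by blast
qed

lemma proper_cone_in_dominant_cone:
  assumes S0: "S0 \<in> jsubsets n j"
  shows "proper_cone_in (ext_space n j) (dominant_cone n j S0)"
  unfolding proper_cone_in_def
proof (intro conjI)
  let ?V = "ext_space n j" and ?K = "dominant_cone n j S0" and ?R = "jsubsets n j - {S0}"
  show "?K \<subseteq> ?V" "?K \<noteq> {}"
    by (auto simp: dominant_cone_def ext_space_iff intro!: exI[of _ "\<lambda>S. 0"])
  show "\<forall>x\<in>?K. \<forall>y\<in>?K. (\<lambda>S. x S + y S) \<in> ?K"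
  proof (intro ballI)
    fix x y assume "x \<in> ?K" "y \<in> ?K"
    moreover have "(\<Sum>S\<in>?R. \<bar>x S + y S\<bar>) \<le> (\<Sum>S\<in>?R. \<bar>x S\<bar> + \<bar>y S\<bar>)"
      by (rule sum_mono) (rule abs_triangle_ineq)
    ultimately show "(\<lambda>S. x S + y S) \<in> ?K" by (auto simp: dominant_cone_def ext_space_iff sum.distrib)
  qed
  show "\<forall>x\<in>?K. \<forall>c::real. c \<ge> 0 \<longrightarrow> (\<lambda>S. c * x S) \<in> ?K"
    by (auto simp: dominant_cone_def ext_space_iff abs_mult sum_distrib_left[symmetric] mult_left_mono)
  show "\<forall>x\<in>?K. (\<lambda>S. - x S) \<in> ?K \<longrightarrow> x = (\<lambda>S. 0)"
  proof (intro ballI impI)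
    fix x assume x: "x \<in> ?K" and nx: "(\<lambda>S. - x S) \<in> ?K"
    show "x = (\<lambda>S. 0)"
    proof (rule ccontr)
      assume "x \<noteq> (\<lambda>S. 0)"
      moreover from this have "(\<lambda>S. - x S) \<noteq> (\<lambda>S. 0)" by (auto simp: fun_eq_iff)
      ultimately have "0 < x S0" "0 < - x S0"
        using dominant_cone_pos[OF x _ S0] dominant_cone_pos[OF nx _ S0] by auto
      then show False by simp
    qed
  qed
  have "?K = ?V \<inter> {x. (\<Sum>S\<in>?R. \<bar>x S\<bar>) \<le> x S0}" by (auto simp: dominant_cone_def)
  then show "closed ?K"
    by (simp add: closed_Int closed_ext_space closed_Collect_le continuous_intros)
  have "(\<lambda>S. if S = S0 then 1 else 0) \<in> top_of_set ?V interior_of ?K"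
    using S0 by (intro dominant_cone_interior) (auto simp: ext_space_iff)
  then show "top_of_set ?V interior_of ?K \<noteq> {}" by blast
qed

lemma K_pos_dominant_cone:
  fixes \<mu> :: "nat set \<Rightarrow> real"
  assumes D: "D \<in> carrier_mat n n" and S0: "S0 \<in> jsubsets n j"
    and minors: "\<And>S T. S \<in> jsubsets n j \<Longrightarrow> T \<in> jsubsets n j \<Longrightarrow>
      det (submatrix D S T) = (if S = T then \<mu> S else 0)"
    and pos: "\<And>S. S \<in> jsubsets n j \<Longrightarrow> 0 < \<mu> S"
    and dominant: "\<And>S. S \<in> jsubsets n j \<Longrightarrow> S \<noteq> S0 \<Longrightarrow> \<mu> S < \<mu> S0"
  shows "K_pos (ext_space n j) (ext_pow j D) (dominant_cone n j S0)"
  unfolding K_pos_def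
proof (rule image_subsetI)
  let ?R = "jsubsets n j - {S0}"
  \<comment> \<open>\<open>c\<close> separates the weights off \<open>S0\<close> from \<open>\<mu> S0\<close>; this makes the estimate below strict.\<close>
  define c where "c = Max (insert 0 (\<mu> ` ?R))"
  have fin: "finite (insert 0 (\<mu> ` ?R))" by (simp add: finite_jsubsets)
  have c: "0 \<le> c" "c < \<mu> S0" "\<And>S. S \<in> ?R \<Longrightarrow> \<mu> S \<le> c"
    using fin pos[OF S0] dominant by (auto simp: c_def Max_less_iff)
  fix x assume "x \<in> dominant_cone n j S0 - {\<lambda>S. 0}"
  then have x: "x \<in> dominant_cone n j S0" "0 < x S0" using dominant_cone_pos S0 by auto
  have Dx: "ext_pow j D x S = \<mu> S * x S" if S: "S \<in> jsubsets n j" for S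
  proof -
    have "ext_pow j D x S = (\<Sum>T\<in>jsubsets n j. det (submatrix D S T) * x T)"
      using D S by (simp add: ext_pow_apply)
    also have "\<dots> = (\<Sum>T\<in>jsubsets n j. if S = T then \<mu> S * x T else 0)"
      using S by (intro sum.cong) (auto simp: minors)
    finally show ?thesis using S by (simp add: finite_jsubsets)
  qed
  have "(\<Sum>S\<in>?R. \<bar>ext_pow j D x S\<bar>) = (\<Sum>S\<in>?R. \<mu> S * \<bar>x S\<bar>)"
  proof (rule sum.cong[OF refl])
    fix S assume "S \<in> ?R"
    then show "\<bar>ext_pow j D x S\<bar> = \<mu> S * \<bar>x S\<bar>" using Dx pos[of S] by (simp add: abs_mult)
  qed
  also have "\<dots> \<le> (\<Sum>S\<in>?R. c * \<bar>x S\<bar>)" using c by (intro sum_mono mult_right_mono) auto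
  also have "\<dots> \<le> c * x S0"
    using x(1) c(1) by (simp add: dominant_cone_def sum_distrib_left[symmetric] mult_left_mono)
  also have "\<dots> < \<mu> S0 * x S0" using c(2) x(2) by simp
  also have "\<dots> = ext_pow j D x S0" using Dx[OF S0] by simp
  finally show "ext_pow j D x \<in> top_of_set (ext_space n j) interior_of dominant_cone n j S0"
    using D ext_pow_in_ext_space[of j D x] by (intro dominant_cone_interior) auto
qed

lemma prod_less_by_exchange:
  fixes d :: "'a \<Rightarrow> real"
  assumes fin: "finite S" "finite T" and card: "card S = card T" and ST: "S \<noteq> T"
    and pos: "\<And>i. i \<in> S \<union> T \<Longrightarrow> 0 < d i"
    and exchange: "\<And>a b. a \<in> T - S \<Longrightarrow> b \<in> S - T \<Longrightarrow> d b < d a"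
  shows "prod d S < prod d T"
proof -
  have "card (S - T) = card S - card (S \<inter> T)" "card (T - S) = card T - card (T \<inter> S)"
    using fin by (simp_all add: card_Diff_subset_Int)
  then have "card (S - T) = card (T - S)" using card by (simp add: Int_commute)
  from finite_same_card_bij[OF _ _ this] obtain h where h: "bij_betw h (S - T) (T - S)"
    using fin by auto
  have "S - T \<noteq> {}"
    using ST card fin card_subset_eq[of T S] by auto
  then obtain b where b: "b \<in> S - T" by blast
  have hb: "h b \<in> T - S" if "b \<in> S - T" for b using h that by (auto simp: bij_betw_def)
  have "prod d (S - T) < prod (\<lambda>b. d (h b)) (S - T)"
    using fin b hb pos exchange by (intro prod_mono_strict) (auto intro: less_imp_le)
  also have "\<dots> = prod d (T - S)" by (rule prod.reindex_bij_betw[OF h])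
  finally have less: "prod d (S - T) < prod d (T - S)" .
  have "0 < prod d (S \<inter> T)" using pos by (intro prod_pos) auto
  then have "prod d (S \<inter> T) * prod d (S - T) < prod d (S \<inter> T) * prod d (T - S)"
    using less by simp
  then show ?thesis
    using fin by (simp add: prod.Int_Diff[of S d T] prod.Int_Diff[of T d S] Int_commute)
qed

lemma max_prod_jsubset_exchange:
  fixes d :: "nat \<Rightarrow> real"
  assumes pos: "\<And>i. i < n \<Longrightarrow> 0 < d i" and S0: "S0 \<in> jsubsets n j"
    and max: "\<And>S. S \<in> jsubsets n j \<Longrightarrow> prod d S \<le> prod d S0"
    and a: "a \<in> S0" and b: "b < n" "b \<notin> S0"
  shows "d b \<le> d a"
proof (rule ccontr)
  assume "\<not> d b \<le> d a"
  have fin: "finite S0" and S0n: "S0 \<subseteq> {0..<n}" using S0 by (auto simp: jsubsets_def finite_subset)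
  let ?S = "insert b (S0 - {a})"
  have "0 < card S0" using fin a by (auto simp: card_gt_0_iff)
  then have "?S \<in> jsubsets n j"
    using S0 a b fin by (auto simp: jsubsets_def card_insert_if card_Suc_Diff1)
  moreover have "0 < prod d (S0 - {a})" using pos S0n by (intro prod_pos) auto
  then have "prod d S0 < prod d ?S"
    using \<open>\<not> d b \<le> d a\<close> a b fin by (simp add: prod.remove[OF fin a] prod.insert)
  ultimately show False using max by fastforce
qed

lemma unique_max_prod_jsubset:
  fixes d :: "nat \<Rightarrow> real"
  assumes pos: "\<And>i. i < n \<Longrightarrow> 0 < d i"
    and distinct: "\<And>i k. i < n \<Longrightarrow> k < n \<Longrightarrow> i \<noteq> k \<Longrightarrow> d i \<noteq> d k"
    and "j \<le> n"
  shows "\<exists>S0\<in>jsubsets n j. \<forall>S\<in>jsubsets n j. S \<noteq> S0 \<longrightarrow> prod d S < prod d S0"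
proof -
  have "{0..<j} \<in> jsubsets n j" using \<open>j \<le> n\<close> by (auto simp: jsubsets_def)
  then have "Max (prod d ` jsubsets n j) \<in> prod d ` jsubsets n j"
    using finite_jsubsets by (intro Max_in) auto
  then obtain S0 where S0: "S0 \<in> jsubsets n j" and "prod d S0 = Max (prod d ` jsubsets n j)" by auto
  then have max: "prod d S \<le> prod d S0" if "S \<in> jsubsets n j" for S
    using that finite_jsubsets by simp
  have "prod d S < prod d S0" if S: "S \<in> jsubsets n j" "S \<noteq> S0" for S
  proof (rule prod_less_by_exchange)
    show "finite S" "finite S0" "card S = card S0" using S S0 by (auto simp: jsubsets_def finite_subset)
    show "0 < d i" if "i \<in> S \<union> S0" for i using that S S0 pos by (auto simp: jsubsets_def)
    show "d b < d a" if "a \<in> S0 - S" "b \<in> S - S0" for a b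
      using that S S0 max_prod_jsubset_exchange[OF pos S0 max, of a b] distinct[of a b]
      by (force simp: jsubsets_def order_less_le)
  qed (use S in simp)
  with S0 show ?thesis by blast
qed

section \<open>Real Jordan normal forms\<close>

interpretation of_real_poly_hom: map_poly_inj_idom_divide_hom complex_of_real ..

lemma char_poly_of_real:
  fixes A :: "real mat"
  assumes "A \<in> carrier_mat n n"
  shows "char_poly (map_mat complex_of_real A) = map_poly complex_of_real (char_poly A)"
  by (rule of_real_hom.char_poly_hom[OF assms])

lemma eigenvalue_of_real_iff:
  fixes A :: "real mat"
  assumes "A \<in> carrier_mat n n"
  shows "eigenvalue (map_mat complex_of_real A) z \<longleftrightarrow> poly (map_poly complex_of_real (char_poly A)) z = 0"
  using eigenvalue_root_char_poly[of "map_mat complex_of_real A" n] char_poly_of_real[OF assms] assms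
  by simp

lemma char_poly_real_linear_factors:
  fixes A :: "real mat"
  assumes A: "A \<in> carrier_mat n n"
    and real: "\<And>e. eigenvalue (map_mat complex_of_real A) e \<Longrightarrow> e \<in> \<real>"
  shows "\<exists>as. char_poly A = (\<Prod>a\<leftarrow>as. [:- a, 1:])"
proof -
  have "map_mat complex_of_real A \<in> carrier_mat n n" using A by simp
  from char_poly_factorized[OF this] obtain cs
    where cs: "char_poly (map_mat complex_of_real A) = (\<Prod>c\<leftarrow>cs. [:- c, 1:])" by blast
  have "c \<in> \<real>" if "c \<in> set cs" for c
  proof (rule real)
    have "poly (\<Prod>c\<leftarrow>cs. [:- c, 1:]) c = 0" using that by (simp add: poly_prod_list prod_list_zero_iff)
    then show "eigenvalue (map_mat complex_of_real A) c"
      using eigenvalue_of_real_iff[OF A] cs char_poly_of_real[OF A] by simp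
  qed
  then have "(\<Prod>c\<leftarrow>cs. [:- c, 1:]) = (\<Prod>c\<leftarrow>cs. map_poly complex_of_real [:- Re c, 1:])"
    by (intro arg_cong[where f = prod_list] map_cong) simp_all
  also have "\<dots> = map_poly complex_of_real (\<Prod>c\<leftarrow>cs. [:- Re c, 1:])"
    by (simp only: of_real_poly_hom.hom_prod_list map_map o_def)
  finally have "char_poly A = (\<Prod>r\<leftarrow>map Re cs. [:- r, 1:])"
    using cs char_poly_of_real[OF A] by (simp add: o_def)
  then show ?thesis by blast
qed

lemma jordan_nf_block_eigenvalue:
  fixes A :: "real mat"
  assumes A: "A \<in> carrier_mat n n" and jnf: "jordan_nf A n_as" and block: "(m, a) \<in> set n_as"
  shows "eigenvalue (map_mat complex_of_real A) (complex_of_real a)"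
proof -
  have "0 < m" using jnf block by (force simp: jordan_nf_def)
  also have "m \<le> order a (char_poly A)" by (rule jordan_nf_block_size_order_bound[OF jnf block])
  finally have "poly (char_poly A) a = 0" by (simp add: order_root)
  then show ?thesis by (simp add: eigenvalue_of_real_iff[OF A] of_real_poly_hom.poly_map_poly)
qed

lemma jordan_nf_conjugate:
  fixes A :: "'a :: comm_ring_1 mat"
  assumes A: "A \<in> carrier_mat n n" and jnf: "jordan_nf A n_as"
  obtains P Q where "P \<in> carrier_mat n n" "Q \<in> carrier_mat n n" "jordan_matrix n_as \<in> carrier_mat n n"
    "P * Q = 1\<^sub>m n" "Q * P = 1\<^sub>m n" "A = P * jordan_matrix n_as * Q"
proof -
  from jnf obtain m P Q where
    carrier: "{A, jordan_matrix n_as, P, Q} \<subseteq> carrier_mat m m"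
    and "P * Q = 1\<^sub>m m" "Q * P = 1\<^sub>m m" "A = P * jordan_matrix n_as * Q"
    unfolding jordan_nf_def by (blast dest: similar_matD)
  moreover have "m = n" using carrier A by auto
  ultimately show ?thesis using that by auto
qed

lemma jordan_matrix_entries:
  assumes "i < sum_list (map fst n_as)" "k < sum_list (map fst n_as)"
  shows "(k \<noteq> i \<and> k \<noteq> Suc i \<longrightarrow> jordan_matrix n_as $$ (i, k) = 0)
       \<and> (k = i \<longrightarrow> jordan_matrix n_as $$ (i, k) \<in> snd ` set n_as)
       \<and> (k = Suc i \<longrightarrow> jordan_matrix n_as $$ (i, k) \<in> {0, 1} \<and>
             ((\<forall>na\<in>set n_as. fst na = 1) \<longrightarrow> jordan_matrix n_as $$ (i, k) = 0))"
  using assms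
proof (induction n_as arbitrary: i k)
  case (Cons na n_as)
  obtain m a where na: "na = (m, a)" by force
  have entry: "jordan_matrix (na # n_as) $$ (i, k) =
    (if i < m then if k < m then jordan_block m a $$ (i, k) else 0
     else if k < m then 0 else jordan_matrix n_as $$ (i - m, k - m))"
    using Cons.prems by (simp add: na jordan_matrix_Cons)
  show ?case
  proof (cases "i < m \<or> k < m")
    case True
    then show ?thesis using entry na by auto
  next
    case False
    then have "k = i \<longleftrightarrow> k - m = i - m" "k = Suc i \<longleftrightarrow> k - m = Suc (i - m)" by auto
    moreover have "i - m < sum_list (map fst n_as)" "k - m < sum_list (map fst n_as)"
      using Cons.prems False na by auto
    ultimately show ?thesis using entry False Cons.IH[of "i - m" "k - m"] by auto
  qed
qed simp

lemma square_dvd_prod: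
  fixes f :: "'b \<Rightarrow> 'a :: comm_semiring_1"
  assumes fin: "finite I" and i: "i \<in> I" and k: "k \<in> I" and ik: "i \<noteq> k"
    and fi: "f i = p" and fk: "f k = p"
  shows "p ^ 2 dvd prod f I"
proof -
  have "prod f I = f i * (f k * prod f (I - {i} - {k}))"
    using fin i k ik by (simp add: prod.remove[of I i] prod.remove[of "I - {i}" k])
  then show ?thesis using fi fk by (metis dvd_triv_left mult.assoc power2_eq_square)
qed

lemma upper_triangular_distinct_diagonal:
  fixes J :: "'a :: field mat"
  assumes J: "J \<in> carrier_mat n n" "upper_triangular J"
    and simple: "\<And>i. i < n \<Longrightarrow> order (J $$ (i, i)) (char_poly J) \<le> 1"
    and ik: "i < n" "k < n" "i \<noteq> k"
  shows "J $$ (i, i) \<noteq> J $$ (k, k)"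
proof
  assume eq: "J $$ (i, i) = J $$ (k, k)"
  have "char_poly J = (\<Prod>l = 0..<n. [:- J $$ (l, l), 1:])"
    using char_poly_upper_triangular[OF J] J
    by (simp add: diag_mat_def prod.distinct_set_conv_list[symmetric] o_def)
  also have "[:- J $$ (i, i), 1:] ^ 2 dvd \<dots>"
    using ik eq by (intro square_dvd_prod[where i = i and k = k]) auto
  finally have "2 \<le> order (J $$ (i, i)) (char_poly J)"
    using degree_monic_char_poly[OF J(1)] by (intro order_max) auto
  with simple[OF ik(1)] show False by simp
qed

lemma jordan_matrix_diagonal_if_simple:
  fixes A :: "'a :: field mat"
  assumes jnf: "jordan_nf A n_as" and simple: "\<And>m a. (m, a) \<in> set n_as \<Longrightarrow> order a (char_poly A) = 1"
    and ik: "i < sum_list (map fst n_as)" "k < sum_list (map fst n_as)" "i \<noteq> k"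
  shows "jordan_matrix n_as $$ (i, k) = 0"
    and "jordan_matrix n_as $$ (i, i) \<noteq> jordan_matrix n_as $$ (k, k)"
proof -
  let ?J = "jordan_matrix n_as" and ?n = "sum_list (map fst n_as)"
  have "fst na = 1" if na: "na \<in> set n_as" for na
  proof -
    obtain m a where ma: "na = (m, a)" by force
    have "m \<le> order a (char_poly A)" using jordan_nf_block_size_order_bound jnf na ma by blast
    moreover have "m \<noteq> 0" using jnf na ma by (force simp: jordan_nf_def)
    ultimately show ?thesis using simple na ma by fastforce
  qed
  then show "?J $$ (i, k) = 0"
    using jordan_matrix_entries[of i n_as k] ik by (cases "k = Suc i") auto
  have "char_poly A = char_poly ?J" using jnf by (simp add: jordan_nf_def char_poly_similar)
  moreover have "order (?J $$ (l, l)) (char_poly A) \<le> 1" if "l < ?n" for l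
    using jordan_matrix_entries[of l n_as l] that simple by force
  ultimately show "?J $$ (i, i) \<noteq> ?J $$ (k, k)"
    using jordan_matrix_upper_triangular[of _ n_as]
    by (intro upper_triangular_distinct_diagonal[OF jordan_matrix_carrier _ _ ik])
      (auto simp: upper_triangular_def)
qed

lemma GTP_if_nonneg_real_eigenvalues:
  fixes A :: "real mat"
  assumes A: "A \<in> carrier_mat n n"
    and eig: "\<And>e. eigenvalue (map_mat complex_of_real A) e \<Longrightarrow> e \<in> \<real> \<and> Re e \<ge> 0"
  shows "\<exists>K. TP_structure n K \<and> GTP A K"
proof -
  obtain n_as where jnf: "jordan_nf A n_as"
    using char_poly_real_linear_factors[OF A] eig jordan_nf_exists[OF A] by blast
  let ?J = "jordan_matrix n_as"
  obtain P Q where P: "P \<in> carrier_mat n n" and Q: "Q \<in> carrier_mat n n" and J: "?J \<in> carrier_mat n n"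
    and PQ: "P * Q = 1\<^sub>m n" and QP: "Q * P = 1\<^sub>m n" and AJ: "A = P * ?J * Q"
    by (rule jordan_nf_conjugate[OF A jnf])
  have dim: "sum_list (map fst n_as) = n" using J unfolding carrier_mat_def by simp
  have "0 \<le> a" if "(m, a) \<in> set n_as" for m a
    using eig[OF jordan_nf_block_eigenvalue[OF A jnf that]] by simp
  then have nonneg: "0 \<le> ?J $$ (i, k)" if "i < n" "k < n" for i k
    using jordan_matrix_entries[of i n_as k] that dim by (cases "k = i"; cases "k = Suc i") auto
  have bidiagonal: "k = i \<or> k = Suc i" if "i < n" "k < n" "?J $$ (i, k) \<noteq> 0" for i k
    using jordan_matrix_entries[of i n_as k] that dim by auto
  have "0 \<le> det (submatrix ?J S T)" if "S \<in> jsubsets n j" "T \<in> jsubsets n j" for S T j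
    using nonneg pick_jsubset_less that
    by (auto simp: det_submatrix_bidiagonal[OF J _ _ bidiagonal] intro!: prod_nonneg)
  then show ?thesis
    using GTP_conjugate[OF P Q J PQ QP, of "nonneg_orthant n"] proper_cone_in_nonneg_orthant
      K_nonneg_nonneg_orthant[OF J] AJ by blast
qed

lemma GSTP_if_simple_positive_eigenvalues:
  fixes A :: "real mat"
  assumes A: "A \<in> carrier_mat n n"
    and eig: "\<And>e. eigenvalue (map_mat complex_of_real A) e \<Longrightarrow>
      e \<in> \<real> \<and> Re e > 0 \<and> order e (char_poly (map_mat complex_of_real A)) = 1"
  shows "\<exists>K. TP_structure n K \<and> GSTP A K"
proof -
  obtain n_as where jnf: "jordan_nf A n_as"
    using char_poly_real_linear_factors[OF A] eig jordan_nf_exists[OF A] by blast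
  let ?J = "jordan_matrix n_as"
  obtain P Q where P: "P \<in> carrier_mat n n" and Q: "Q \<in> carrier_mat n n" and J: "?J \<in> carrier_mat n n"
    and PQ: "P * Q = 1\<^sub>m n" and QP: "Q * P = 1\<^sub>m n" and AJ: "A = P * ?J * Q"
    by (rule jordan_nf_conjugate[OF A jnf])
  have dim: "sum_list (map fst n_as) = n" using J unfolding carrier_mat_def by simp
  have block: "0 < a \<and> order a (char_poly A) = 1" if "(m, a) \<in> set n_as" for m a
    using eig[OF jordan_nf_block_eigenvalue[OF A jnf that]]
    by (simp add: char_poly_of_real[OF A] of_real_poly_hom.order_hom)
  define d where "d i = ?J $$ (i, i)" for i
  have pos: "0 < d i" if "i < n" for i
    using jordan_matrix_entries[of i n_as i] that dim block by (force simp: d_def)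
  have diagonal: "?J $$ (i, k) = 0" and distinct: "d i \<noteq> d k" if "i < n" "k < n" "i \<noteq> k" for i k
    using jordan_matrix_diagonal_if_simple[OF jnf] block that dim by (auto simp: d_def)
  obtain S0 where S0: "\<And>j. j \<in> {1..n} \<Longrightarrow> S0 j \<in> jsubsets n j"
    and S0_max: "\<And>j S. j \<in> {1..n} \<Longrightarrow> S \<in> jsubsets n j \<Longrightarrow> S \<noteq> S0 j \<Longrightarrow> prod d S < prod d (S0 j)"
    using unique_max_prod_jsubset[of n d] pos distinct by (metis atLeastAtMost_iff)
  have "det (submatrix ?J S T) = (if S = T then prod d S else 0)"
    if "S \<in> jsubsets n j" "T \<in> jsubsets n j" for S T j
    using det_submatrix_diagonal[OF J that diagonal] by (simp add: d_def)
  moreover have "0 < prod d S" if "S \<in> jsubsets n j" for S j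
    using that pos by (intro prod_pos) (auto simp: jsubsets_def)
  ultimately show ?thesis
    using GSTP_conjugate[OF P Q J PQ QP, of "\<lambda>j. dominant_cone n j (S0 j)"]
      proper_cone_in_dominant_cone[OF S0] K_pos_dominant_cone[OF J S0] S0_max AJ by blast
qed

theorem proposition19:
  fixes A :: "real mat" and n :: nat
  assumes "A \<in> carrier_mat n n"
  shows "((\<forall>e. eigenvalue (map_mat complex_of_real A) e \<longrightarrow> e \<in> \<real> \<and> Re e \<ge> 0)
            \<longrightarrow> (\<exists>K. TP_structure n K \<and> GTP A K))
       \<and> ((\<forall>e. eigenvalue (map_mat complex_of_real A) e \<longrightarrow>
               e \<in> \<real> \<and> Re e > 0 \<and> order e (char_poly (map_mat complex_of_real A)) = 1)
            \<longrightarrow> (\<exists>K. TP_structure n K \<and> GSTP A K))"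
  using GTP_if_nonneg_real_eigenvalues[OF assms] GSTP_if_simple_positive_eigenvalues[OF assms] by blast

end
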